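(* Let $p$ be a seminorm on $\mathbb{R}^d$ and let $T:\mathbb{R}^d\to\mathbb{R}^d$ be a $\gamma$-contraction mapping with respect to $p$, i.e. there is $\gamma\in[0,1)$ with $p(T(x)-T(y))\le \gamma\, p(x-y)$ for all $x,y\in\mathbb{R}^d$. Then there exists $x^*\in\mathbb{R}^d$ such that $p(T(x^* )-x^* )=0$. In addition, for any $x_0\in\mathbb{R}^d$, the sequence $\{x_k\}$ generated by $x_{k+1}=T(x_k)$ satisfies $$p(x_k-x^* )\le \gamma^k\, p(x_0-x^* )\quad\text{for all } k\ge 0.$$
   Context: A seminorm on $\mathbb{R}^d$ is a function $p:\mathbb{R}^d\to[0,\infty)$ with $p(\alpha x)=|\alpha|p(x)$ and $p(x+y)\le p(x)+p(y)$ for all $x,y\in\mathbb{R}^d$, $\alpha\in\mathbb{R}$ (it need not satisfy $p(x)=0\Rightarrow x=0$). *)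

theory Defs
  imports "HOL-Analysis.Analysis"
begin

definition is_seminorm :: "(real ^ 'd \<Rightarrow> real) \<Rightarrow> bool" where
  "is_seminorm p \<longleftrightarrow>
     (\<forall>x. 0 \<le> p x) \<and>
     (\<forall>a x. p (a *\<^sub>R x) = \<bar>a\<bar> * p x) \<and>
     (\<forall>x y. p (x + y) \<le> p x + p y)"

end

theory Submission
  imports Defs
begin

text \<open>
  On the orthogonal complement \<open>W\<close> of the null space of \<open>p\<close>, the seminorm \<open>p\<close> is a norm, and
  by compactness of the unit sphere of \<open>W\<close> it dominates a multiple of the Euclidean norm; hence
  \<open>W\<close> with the metric \<open>p (u - v)\<close> is complete. Every \<open>x\<close> differs from its orthogonal projection
  onto \<open>W\<close> by a null vector, so composing \<open>T\<close> with this projection gives a \<open>\<gamma>\<close>-contraction of \<open>W\<close>,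
  whose Banach fixed point \<open>x\<^sup>*\<close> satisfies \<open>p (T x\<^sup>* - x\<^sup>*) = 0\<close>. The rate follows from
  \<open>p (T x - x\<^sup>*) \<le> p (T x - T x\<^sup>*) + p (T x\<^sup>* - x\<^sup>*) \<le> \<gamma> p (x - x\<^sup>*)\<close>.
\<close>

locale seminorm =
  fixes p :: "'a::euclidean_space \<Rightarrow> real"
  assumes nonneg: "0 \<le> p x"
    and homogeneous: "p (a *\<^sub>R x) = \<bar>a\<bar> * p x"
    and triangle: "p (x + y) \<le> p x + p y"
begin

lemma zero [simp]: "p 0 = 0"
  using homogeneous[of 0] by simp

lemma minus: "p (- x) = p x"
  using homogeneous[of "-1" x] by simp

lemma diff_commute: "p (x - y) = p (y - x)"
  using minus[of "x - y"] by simp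

lemma diff_triangle: "p (x - z) \<le> p (x - y) + p (y - z)"
  using triangle[of "x - y" "y - z"] by simp

lemma add_null: "p z = 0 \<Longrightarrow> p (x + z) = p x"
  using triangle[of x z] triangle[of "x + z" "- z"] minus[of z] by simp

lemma continuous: "continuous_on S p"
proof -
  have "convex_on UNIV p"
  proof (rule convex_onI)
    fix x y :: 'a and t :: real
    assume "0 < t" "t < 1"
    then show "p ((1 - t) *\<^sub>R x + t *\<^sub>R y) \<le> (1 - t) * p x + t * p y"
      using triangle[of "(1 - t) *\<^sub>R x" "t *\<^sub>R y"] by (simp add: homogeneous)
  qed simp
  then show ?thesis
    using convex_on_continuous continuous_on_subset by blast
qed

definition null_space :: "'a set" where
  "null_space = {x. p x = 0}"

lemma subspace_null_space: "subspace null_space"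
  unfolding subspace_def null_space_def
  by (auto simp: homogeneous) (metis add.right_neutral antisym nonneg triangle)

lemma null_space_complement_eq_0:
  "w \<in> null_space\<^sup>\<bottom> \<Longrightarrow> p w = 0 \<Longrightarrow> w = 0"
  using orthogonal_Int_0[OF subspace_null_space] by (auto simp: null_space_def)

definition canonical_rep :: "'a \<Rightarrow> 'a" where
  "canonical_rep x = (SOME w. w \<in> null_space\<^sup>\<bottom> \<and> x - w \<in> null_space)"

lemma canonical_rep: "canonical_rep x \<in> null_space\<^sup>\<bottom>" "p (x - canonical_rep x) = 0"
proof -
  obtain n w where "n \<in> null_space" "w \<in> null_space\<^sup>\<bottom>" "x = n + w"
    using subspace_sum_orthogonal_comp[OF subspace_null_space] by (metis UNIV_I set_plus_elim)
  then have "\<exists>w. w \<in> null_space\<^sup>\<bottom> \<and> x - w \<in> null_space"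
    by (metis add_diff_cancel_right')
  then have "canonical_rep x \<in> null_space\<^sup>\<bottom> \<and> x - canonical_rep x \<in> null_space"
    unfolding canonical_rep_def by (rule someI_ex)
  then show "canonical_rep x \<in> null_space\<^sup>\<bottom>" "p (x - canonical_rep x) = 0"
    by (auto simp: null_space_def)
qed

lemma canonical_rep_diff: "p (canonical_rep x - canonical_rep y) = p (x - y)"
proof -
  have "canonical_rep x - canonical_rep y
          = (x - y) + (- (x - canonical_rep x) + (y - canonical_rep y))"
    by simp
  moreover have "p (- (x - canonical_rep x) + (y - canonical_rep y)) = 0"
    using add_null canonical_rep(2) minus by metis
  ultimately show ?thesis
    using add_null by metis
qed

lemma bounded_below_on_null_space_complement:
  obtains c where "c > 0" "\<And>w. w \<in> null_space\<^sup>\<bottom> \<Longrightarrow> c * norm w \<le> p w"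
proof -
  let ?S = "null_space\<^sup>\<bottom> \<inter> sphere 0 1"
  have sgn_in_S: "sgn w \<in> ?S" if "w \<in> null_space\<^sup>\<bottom>" "w \<noteq> 0" for w
    using that subspace_scale[OF subspace_orthogonal_comp] by (simp add: sgn_div_norm norm_sgn)
  have scale_sgn: "p w = norm w * p (sgn w)" for w
    using homogeneous[of "norm w" "sgn w"] by (cases "w = 0") (simp_all add: sgn_div_norm)
  show thesis
  proof (cases "?S = {}")
    case True
    then show thesis
      using that[of 1] sgn_in_S by fastforce
  next
    case False
    have "compact ?S"
      by (intro closed_Int_compact closed_subspace subspace_orthogonal_comp compact_sphere)
    then obtain s where s: "s \<in> ?S" "\<And>y. y \<in> ?S \<Longrightarrow> p s \<le> p y"
      using continuous_attains_inf[OF _ False continuous] by blast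
    then have "p s \<noteq> 0"
      using null_space_complement_eq_0 by force
    then have "p s > 0"
      using nonneg[of s] by linarith
    moreover have "p s * norm w \<le> p w" if "w \<in> null_space\<^sup>\<bottom>" for w
      using that s(2)[OF sgn_in_S[OF that]] scale_sgn[of w]
      by (cases "w = 0") (simp_all add: mult.commute)
    ultimately show thesis
      using that by blast
  qed
qed

lemma Metric_space_null_space_complement:
  "Metric_space (null_space\<^sup>\<bottom>) (\<lambda>u v. p (u - v))"
proof
  fix x y z
  show "0 \<le> p (x - y)" by (rule nonneg)
  show "p (x - y) = p (y - x)" by (rule diff_commute)
  show "p (x - z) \<le> p (x - y) + p (y - z)" by (rule diff_triangle)
  assume "x \<in> null_space\<^sup>\<bottom>" "y \<in> null_space\<^sup>\<bottom>"
  then have "x - y \<in> null_space\<^sup>\<bottom>"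
    by (simp add: subspace_diff subspace_orthogonal_comp)
  then show "p (x - y) = 0 \<longleftrightarrow> x = y"
    using null_space_complement_eq_0[of "x - y"] by auto
qed

interpretation complement: Metric_space "null_space\<^sup>\<bottom>" "\<lambda>u v. p (u - v)"
  by (rule Metric_space_null_space_complement)

lemma MCauchy_imp_Cauchy:
  assumes "complement.MCauchy \<sigma>"
  shows "Cauchy \<sigma>"
proof (rule metric_CauchyI)
  fix e :: real
  assume "e > 0"
  obtain c where c: "c > 0" "\<And>w. w \<in> null_space\<^sup>\<bottom> \<Longrightarrow> c * norm w \<le> p w"
    using bounded_below_on_null_space_complement by blast
  have "c * e > 0"
    using c(1) \<open>e > 0\<close> by simp
  moreover have "\<forall>\<epsilon>>0. \<exists>N. \<forall>m n. N \<le> m \<longrightarrow> N \<le> n \<longrightarrow> p (\<sigma> m - \<sigma> n) < \<epsilon>"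
    using assms by (simp add: complement.MCauchy_def)
  ultimately obtain N where N: "\<And>m n. N \<le> m \<Longrightarrow> N \<le> n \<Longrightarrow> p (\<sigma> m - \<sigma> n) < c * e"
    by blast
  have "dist (\<sigma> m) (\<sigma> n) < e" if "N \<le> m" "N \<le> n" for m n
  proof -
    have "\<sigma> m - \<sigma> n \<in> null_space\<^sup>\<bottom>"
      using assms
      by (simp add: complement.MCauchy_def image_subset_iff subspace_diff subspace_orthogonal_comp)
    then have "c * norm (\<sigma> m - \<sigma> n) < c * e"
      using c(2) N[OF that] by (meson le_less_trans)
    then show ?thesis
      using c(1) by (simp add: dist_norm)
  qed
  then show "\<exists>N. \<forall>m\<ge>N. \<forall>n\<ge>N. dist (\<sigma> m) (\<sigma> n) < e"
    by blast
qed

lemma mcomplete_null_space_complement: complement.mcomplete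
  unfolding complement.mcomplete_def
proof (intro allI impI)
  fix \<sigma>
  assume MCauchy: "complement.MCauchy \<sigma>"
  then have in_complement: "\<sigma> n \<in> null_space\<^sup>\<bottom>" for n
    by (simp add: complement.MCauchy_def image_subset_iff)
  obtain l where l: "\<sigma> \<longlonglongrightarrow> l"
    using MCauchy_imp_Cauchy[OF MCauchy] Cauchy_convergent_iff convergent_def by blast
  have "l \<in> null_space\<^sup>\<bottom>"
    by (rule closed_sequentially[OF closed_subspace[OF subspace_orthogonal_comp] _ l])
      (simp add: in_complement)
  moreover have "(\<lambda>n. p (\<sigma> n - l)) \<longlonglongrightarrow> 0"
    using continuous_on_tendsto_compose[OF continuous[of UNIV] tendsto_diff[OF l tendsto_const[of l]]]
    by simp
  then have "\<forall>\<^sub>F n in sequentially. \<sigma> n \<in> null_space\<^sup>\<bottom> \<and> p (\<sigma> n - l) < \<epsilon>"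
    if "\<epsilon> > 0" for \<epsilon>
    using order_tendstoD(2)[OF _ that] in_complement by simp
  ultimately have "limitin complement.mtopology \<sigma> l sequentially"
    unfolding complement.limitin_metric by blast
  then show "\<exists>l. limitin complement.mtopology \<sigma> l sequentially"
    by blast
qed

lemma contraction_has_null_fixed_point:
  assumes "\<gamma> < 1" and contraction: "\<And>x y. p (T x - T y) \<le> \<gamma> * p (x - y)"
  obtains x where "p (T x - x) = 0"
proof -
  let ?f = "canonical_rep \<circ> T"
  have "null_space\<^sup>\<bottom> \<noteq> {}"
    using subspace_0[OF subspace_orthogonal_comp] by blast
  moreover have "?f \<in> null_space\<^sup>\<bottom> \<rightarrow> null_space\<^sup>\<bottom>"
    using canonical_rep(1) by (simp add: Pi_iff)
  moreover have "p (?f x - ?f y) \<le> \<gamma> * p (x - y)" for x y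
    using contraction[of x y] canonical_rep_diff[of "T x" "T y"] by simp
  ultimately obtain w where "?f w = w"
    using complement.Banach_fixedpoint_thm[OF mcomplete_null_space_complement _ _ \<open>\<gamma> < 1\<close>]
    by metis
  then have "p (T w - w) = 0"
    using canonical_rep(2)[of "T w"] by simp
  then show thesis
    by (rule that)
qed

lemma contraction_iterate_bound:
  assumes "0 \<le> \<gamma>" and contraction: "\<And>x y. p (T x - T y) \<le> \<gamma> * p (x - y)"
    and fixed: "p (T xs - xs) = 0"
  shows "p ((T ^^ k) x0 - xs) \<le> \<gamma> ^ k * p (x0 - xs)"
proof (induction k)
  case 0
  then show ?case by simp
next
  case (Suc k)
  have "p ((T ^^ Suc k) x0 - xs) \<le> p (T ((T ^^ k) x0) - T xs) + p (T xs - xs)"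
    using diff_triangle by simp
  also have "\<dots> \<le> \<gamma> * p ((T ^^ k) x0 - xs)"
    using contraction[of "(T ^^ k) x0" xs] fixed by simp
  also have "\<dots> \<le> \<gamma> * (\<gamma> ^ k * p (x0 - xs))"
    using Suc.IH \<open>0 \<le> \<gamma>\<close> by (rule mult_left_mono)
  finally show ?case
    by simp
qed

end

lemma is_seminorm_imp_seminorm: "is_seminorm p \<Longrightarrow> seminorm p"
  unfolding is_seminorm_def by unfold_locales blast+

theorem theorem1:
  fixes p :: "real ^ 'd \<Rightarrow> real" and T :: "real ^ 'd \<Rightarrow> real ^ 'd" and \<gamma> :: real
  assumes "is_seminorm p"
    and "0 \<le> \<gamma>" and "\<gamma> < 1"
    and "\<forall>x y. p (T x - T y) \<le> \<gamma> * p (x - y)"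
  shows "\<exists>xs. p (T xs - xs) = 0 \<and>
           (\<forall>x0 k. p ((T ^^ k) x0 - xs) \<le> \<gamma> ^ k * p (x0 - xs))"
proof -
  interpret seminorm p
    using assms(1) by (rule is_seminorm_imp_seminorm)
  have contraction: "\<And>x y. p (T x - T y) \<le> \<gamma> * p (x - y)"
    using assms(4) by blast
  obtain xs where "p (T xs - xs) = 0"
    using contraction_has_null_fixed_point[OF assms(3) contraction] .
  then show ?thesis
    using contraction_iterate_bound[OF assms(2) contraction] by blast
qed

end
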